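(* Let $X$ be a real Banach space. Then $X$ is fully Mazur if and only if $S_1(Y)=X^*$ for every norming and norm-closed linear subspace $Y\subset X^*$.
   Context: For $A\subset X^*$, $S_1(A)$ denotes the set of all limits of $w^*$-convergent sequences contained in $A$. A linear subspace $Y\subset X^*$ is norming if $|||x|||=\sup\{x^*(x): x^*\in Y,\ \|x^*\|\le 1\}$ defines an equivalent norm on $X$. $X$ is fully Mazur if for every norming and norm-closed subspace $Y\subset X^*$, every $w^*$-sequentially continuous linear functional $f:Y\to\mathbb{R}$ is $w^*$-continuous. *)

theory Defs
  imports "HOL-Analysis.Analysis"
begin

(* The dual space X* of a real Banach space X (a type of class banach) is
  the type of bounded linear functionals  'a \<Rightarrow>\<^sub>L real  with the operator norm. *)

definition wstar_topology :: "('a::real_normed_vector \<Rightarrow>\<^sub>L real) topology" where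
  "wstar_topology = pullback_topology UNIV blinfun_apply (powertop_real UNIV)"

definition wstar_conv :: "(nat \<Rightarrow> ('a::real_normed_vector \<Rightarrow>\<^sub>L real)) \<Rightarrow> ('a \<Rightarrow>\<^sub>L real) \<Rightarrow> bool" where
  "wstar_conv s g \<longleftrightarrow> (\<forall>x. (\<lambda>n. blinfun_apply (s n) x) \<longlonglongrightarrow> blinfun_apply g x)"

definition S1 :: "('a::real_normed_vector \<Rightarrow>\<^sub>L real) set \<Rightarrow> ('a \<Rightarrow>\<^sub>L real) set" where
  "S1 A = {g. \<exists>s. (\<forall>n. s n \<in> A) \<and> wstar_conv s g}"

(* Norming subspace: a linear subspace Y such that
  |||x||| = sup { y x : y \<in> Y, norm y \<le> 1 } is an equivalent norm on X.
  Since |||x||| \<le> norm x always, this means |||x||| \<ge> c * norm x for some c > 0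
  (which also makes ||| . ||| a norm). *)
definition norming :: "('a::real_normed_vector \<Rightarrow>\<^sub>L real) set \<Rightarrow> bool" where
  "norming Y \<longleftrightarrow> subspace Y \<and>
     (\<exists>c>0. \<forall>x. c * norm x \<le> (SUP y\<in>{y\<in>Y. norm y \<le> 1}. blinfun_apply y x))"

(* A functional f : Y \<rightarrow> R (represented by a total function, only values on Y matter). *)
definition linear_on_subspace :: "('a::real_normed_vector \<Rightarrow>\<^sub>L real) set \<Rightarrow> (('a \<Rightarrow>\<^sub>L real) \<Rightarrow> real) \<Rightarrow> bool" where
  "linear_on_subspace Y f \<longleftrightarrow>
     (\<forall>y\<in>Y. \<forall>z\<in>Y. \<forall>a b. f (a *\<^sub>R y + b *\<^sub>R z) = a * f y + b * f z)"

definition wstar_seq_continuous_on :: "('a::real_normed_vector \<Rightarrow>\<^sub>L real) set \<Rightarrow> (('a \<Rightarrow>\<^sub>L real) \<Rightarrow> real) \<Rightarrow> bool" where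
  "wstar_seq_continuous_on Y f \<longleftrightarrow>
     (\<forall>s g. (\<forall>n. s n \<in> Y) \<longrightarrow> g \<in> Y \<longrightarrow> wstar_conv s g \<longrightarrow> (\<lambda>n. f (s n)) \<longlonglongrightarrow> f g)"

definition wstar_continuous_on :: "('a::real_normed_vector \<Rightarrow>\<^sub>L real) set \<Rightarrow> (('a \<Rightarrow>\<^sub>L real) \<Rightarrow> real) \<Rightarrow> bool" where
  "wstar_continuous_on Y f \<longleftrightarrow> continuous_map (subtopology wstar_topology Y) euclideanreal f"

definition fully_Mazur :: "'a::banach itself \<Rightarrow> bool" where
  "fully_Mazur _ \<longleftrightarrow>
     (\<forall>Y :: ('a \<Rightarrow>\<^sub>L real) set. norming Y \<and> closed Y \<longrightarrow>
        (\<forall>f. linear_on_subspace Y f \<and> wstar_seq_continuous_on Y f \<longrightarrow> wstar_continuous_on Y f))"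

end

theory Submission
  imports Defs
begin

(* If g is not in S1(Y), the coefficient of g in Y + Rg is a linear functional on a closed norming
  subspace; it is w*-sequentially continuous, since a sequence y_n + t_n g whose coefficients stay
  away from the limit coefficient yields, after rescaling, a sequence in Y w*-converging to g.
  A fully Mazur space makes it w*-continuous; but it vanishes on Y, which is w*-dense because a
  norming subspace separates points, while it is 1 at g.
  Conversely, a w*-sequentially continuous functional f on Y is bounded with closed kernel K, and
  f vanishes on S1(K) \<inter> Y, so K is not norming unless f = 0. Hence some nonzero vectors x are almost
  annihilated by K, and suitably rescaled they give evaluations approximating f uniformly on the
  unit ball of Y. As Y is norming these evaluations form a Cauchy sequence in X; its limit x
  represents f as y \<mapsto> y x, which is w*-continuous. *)

section \<open>Norming subspaces and the weak* topology\<close>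

lemma bdd_above_blinfun_apply_unit_ball:
  fixes Y :: "('a::real_normed_vector \<Rightarrow>\<^sub>L real) set"
  shows "bdd_above ((\<lambda>y. blinfun_apply y x) ` {y\<in>Y. norm y \<le> 1})"
proof (rule bdd_aboveI2)
  fix y assume "y \<in> {y\<in>Y. norm y \<le> 1}"
  then have "norm y * norm x \<le> 1 * norm x" by (intro mult_right_mono) auto
  then show "blinfun_apply y x \<le> norm x"
    using norm_blinfun[of y x] by simp
qed

lemma norming_imp_subspace: "norming Y \<Longrightarrow> subspace Y"
  unfolding norming_def by blast

lemma norming_imp_lower_bound:
  assumes "norming Y"
  obtains c where "c > 0"
    "\<And>x M. M \<ge> 0 \<Longrightarrow> (\<And>y. y \<in> Y \<Longrightarrow> blinfun_apply y x \<le> M * norm y) \<Longrightarrow> c * norm x \<le> M"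
proof -
  from assms obtain c where "c > 0"
    and c: "\<And>x. c * norm x \<le> (SUP y\<in>{y\<in>Y. norm y \<le> 1}. blinfun_apply y x)"
    unfolding norming_def by auto
  moreover have "c * norm x \<le> M"
    if "M \<ge> 0" and M: "\<And>y. y \<in> Y \<Longrightarrow> blinfun_apply y x \<le> M * norm y" for x M
  proof -
    have "{y\<in>Y. norm y \<le> 1} \<noteq> {}"
      using assms norming_imp_subspace subspace_0 by fastforce
    then have "(SUP y\<in>{y\<in>Y. norm y \<le> 1}. blinfun_apply y x) \<le> M"
    proof (rule cSUP_least)
      fix y assume y: "y \<in> {y\<in>Y. norm y \<le> 1}"
      then have "M * norm y \<le> M * 1" using \<open>M \<ge> 0\<close> by (intro mult_left_mono) auto
      then show "blinfun_apply y x \<le> M" using M y by fastforce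
    qed
    then show ?thesis using c order_trans by blast
  qed
  ultimately show thesis using that by blast
qed

lemma norming_separates:
  assumes "norming Y" "\<And>y. y \<in> Y \<Longrightarrow> blinfun_apply y x = 0"
  shows "x = 0"
proof -
  obtain c where "c > 0"
    and c: "\<And>x M. M \<ge> 0 \<Longrightarrow> (\<And>y. y \<in> Y \<Longrightarrow> blinfun_apply y x \<le> M * norm y) \<Longrightarrow> c * norm x \<le> M"
    using norming_imp_lower_bound[OF assms(1)] by blast
  have "c * norm x \<le> 0" by (rule c) (simp_all add: assms(2))
  then show ?thesis using \<open>c > 0\<close> by (simp add: mult_le_0_iff)
qed

lemma norming_superset:
  assumes "norming Y" "Y \<subseteq> Z" "subspace Z"
  shows "norming Z"
proof -
  obtain c where "c > 0"
    and c: "\<And>x. c * norm x \<le> (SUP y\<in>{y\<in>Y. norm y \<le> 1}. blinfun_apply y x)"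
    using assms(1) unfolding norming_def by auto
  have "0 \<in> Y" using assms(1) norming_imp_subspace subspace_0 by blast
  then have "(SUP y\<in>{y\<in>Y. norm y \<le> 1}. blinfun_apply y x)
      \<le> (SUP y\<in>{y\<in>Z. norm y \<le> 1}. blinfun_apply y x)" for x
    using assms(2) by (intro cSUP_subset_mono bdd_above_blinfun_apply_unit_ball) auto
  then show ?thesis
    unfolding norming_def using assms(3) \<open>c > 0\<close> c order_trans by blast
qed

lemma not_norming_imp_almost_annihilated:
  assumes "subspace K" "\<not> norming K" "\<epsilon> > 0"
  obtains x where "x \<noteq> 0" "\<And>k. k \<in> K \<Longrightarrow> \<bar>blinfun_apply k x\<bar> \<le> \<epsilon> * norm x * norm k"
proof -
  obtain x where x: "(SUP y\<in>{y\<in>K. norm y \<le> 1}. blinfun_apply y x) < \<epsilon> * norm x"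
    using assms unfolding norming_def by (meson not_le)
  define S where "S = (SUP y\<in>{y\<in>K. norm y \<le> 1}. blinfun_apply y x)"
  have le_S: "blinfun_apply k x \<le> S" if "k \<in> K" "norm k \<le> 1" for k
    unfolding S_def using that bdd_above_blinfun_apply_unit_ball by (intro cSUP_upper) auto
  have "0 \<le> S" using le_S[of 0] assms(1) subspace_0 by force
  then have "x \<noteq> 0" using x S_def by auto
  moreover have "\<bar>blinfun_apply k x\<bar> \<le> \<epsilon> * norm x * norm k" if "k \<in> K" for k
  proof (cases "k = 0")
    case False
    define k' where "k' = (1 / norm k) *\<^sub>R k"
    have "k' \<in> K" "- k' \<in> K" "norm k' = 1"
      using assms(1) \<open>k \<in> K\<close> False by (auto simp: k'_def subspace_scale subspace_neg)
    then have "\<bar>blinfun_apply k' x\<bar> \<le> \<epsilon> * norm x"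
      using le_S[of k'] le_S[of "- k'"] x S_def by (auto simp: blinfun.minus_left)
    then have "norm k * \<bar>blinfun_apply k' x\<bar> \<le> norm k * (\<epsilon> * norm x)"
      by (rule mult_left_mono) simp
    moreover have "blinfun_apply k x = norm k * blinfun_apply k' x"
      using False by (simp add: k'_def blinfun.scaleR_left)
    ultimately show ?thesis by (simp add: abs_mult mult_ac)
  qed simp
  ultimately show thesis using that by blast
qed

lemma tendsto_imp_wstar_conv: "s \<longlonglongrightarrow> l \<Longrightarrow> wstar_conv s l"
  unfolding wstar_conv_def using blinfun.tendsto[OF _ tendsto_const] by blast

lemma subset_S1: "Y \<subseteq> S1 Y"
  unfolding S1_def wstar_conv_def by (auto intro!: exI[of _ "\<lambda>n. _"])

lemma topspace_wstar_topology [simp]: "topspace wstar_topology = UNIV"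
  unfolding wstar_topology_def topspace_pullback_topology by simp

lemma continuous_map_wstar_blinfun_apply:
  "continuous_map wstar_topology euclideanreal (\<lambda>y. blinfun_apply y x)"
proof -
  have "continuous_map (pullback_topology UNIV blinfun_apply (powertop_real UNIV)) euclideanreal
      ((\<lambda>\<phi>. \<phi> x) \<circ> blinfun_apply)"
    by (rule continuous_map_pullback[OF continuous_map_product_projection]) simp
  then show ?thesis unfolding wstar_topology_def by (simp add: o_def)
qed

lemma wstar_continuous_on_evaluation:
  assumes "\<And>y. y \<in> Y \<Longrightarrow> f y = blinfun_apply y x"
  shows "wstar_continuous_on Y f"
  unfolding wstar_continuous_on_def
  using continuous_map_from_subtopology[OF continuous_map_wstar_blinfun_apply]
  by (rule continuous_map_eq) (simp add: assms)

section \<open>Weak* density of separating subspaces\<close>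

lemma linear_blinfun_apply: "linear (blinfun_apply h)"
  by (simp add: bounded_linear.linear blinfun.bounded_linear_right)

lemma in_span_if_annihilator_vanishes:
  fixes Y :: "('a::real_normed_vector \<Rightarrow>\<^sub>L real) set"
  assumes "finite F" "subspace Y"
    and separating: "\<And>x. (\<And>h. h \<in> Y \<Longrightarrow> blinfun_apply h x = 0) \<Longrightarrow> x = 0"
    and "\<And>h. h \<in> Y \<Longrightarrow> (\<forall>i\<in>F. blinfun_apply h i = 0) \<Longrightarrow> blinfun_apply h x = 0"
  shows "x \<in> span F"
  using assms(1,4)
proof (induction F arbitrary: x rule: finite_induct)
  case empty
  then show ?case using separating by auto
next
  case (insert a F)
  show ?case
  proof (cases "\<forall>h\<in>Y. (\<forall>i\<in>F. blinfun_apply h i = 0) \<longrightarrow> blinfun_apply h a = 0")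
    case True
    then have "a \<in> span F" using insert.IH by blast
    then have "x \<in> span F"
      using insert.IH insert.prems linear_eq_0_on_span[OF linear_blinfun_apply] by (metis insert_iff)
    then show ?thesis by (meson span_mono subset_insertI subsetD)
  next
    case False
    then obtain k where k: "k \<in> Y" "\<forall>i\<in>F. blinfun_apply k i = 0" "blinfun_apply k a \<noteq> 0"
      by blast
    define k' where "k' = (1 / blinfun_apply k a) *\<^sub>R k"
    have k': "k' \<in> Y" "blinfun_apply k' a = 1" "\<forall>i\<in>F. blinfun_apply k' i = 0"
      using k \<open>subspace Y\<close> by (simp_all add: k'_def subspace_scale blinfun.scaleR_left)
    \<comment> \<open>With \<open>k'\<close> dual to \<open>a\<close>, removing the \<open>a\<close>-component of \<open>x\<close> reduces to \<open>F\<close>.\<close>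
    have "x - blinfun_apply k' x *\<^sub>R a \<in> span F"
    proof (rule insert.IH)
      fix h assume h: "h \<in> Y" "\<forall>i\<in>F. blinfun_apply h i = 0"
      have "h - blinfun_apply h a *\<^sub>R k' \<in> Y"
        using \<open>subspace Y\<close> h(1) k'(1) by (simp add: subspace_diff subspace_scale)
      moreover have "\<forall>i\<in>insert a F. blinfun_apply (h - blinfun_apply h a *\<^sub>R k') i = 0"
        using h(2) k'(2,3) by (simp add: blinfun.diff_left blinfun.scaleR_left)
      ultimately have "blinfun_apply (h - blinfun_apply h a *\<^sub>R k') x = 0"
        using insert.prems by blast
      then show "blinfun_apply h (x - blinfun_apply k' x *\<^sub>R a) = 0"
        by (simp add: blinfun.diff_right blinfun.scaleR_right blinfun.diff_left
            blinfun.scaleR_left algebra_simps)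
    qed
    then have "x - blinfun_apply k' x *\<^sub>R a + blinfun_apply k' x *\<^sub>R a \<in> span (insert a F)"
      by (meson span_add span_base span_mono span_scale insertI1 subset_insertI subsetD)
    then show ?thesis by simp
  qed
qed

lemma separating_subspace_interpolates:
  fixes Y :: "('a::real_normed_vector \<Rightarrow>\<^sub>L real) set"
  assumes "finite F" "subspace Y"
    and separating: "\<And>x. (\<And>h. h \<in> Y \<Longrightarrow> blinfun_apply h x = 0) \<Longrightarrow> x = 0"
  shows "\<exists>h\<in>Y. \<forall>i\<in>F. blinfun_apply h i = blinfun_apply g i"
  using assms(1)
proof (induction F rule: finite_induct)
  case empty
  then show ?case using \<open>subspace Y\<close> subspace_0 by blast
next
  case (insert a F)
  then obtain h where h: "h \<in> Y" "\<forall>i\<in>F. blinfun_apply h i = blinfun_apply g i" by blast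
  show ?case
  proof (cases "\<exists>k\<in>Y. (\<forall>i\<in>F. blinfun_apply k i = 0) \<and> blinfun_apply k a \<noteq> 0")
    case True
    then obtain k where k: "k \<in> Y" "\<forall>i\<in>F. blinfun_apply k i = 0" "blinfun_apply k a \<noteq> 0"
      by blast
    let ?h = "h + ((blinfun_apply g a - blinfun_apply h a) / blinfun_apply k a) *\<^sub>R k"
    have "?h \<in> Y" using \<open>subspace Y\<close> h(1) k(1) by (simp add: subspace_add subspace_scale)
    moreover have "\<forall>i\<in>insert a F. blinfun_apply ?h i = blinfun_apply g i"
      using h(2) k(2,3) by (simp add: blinfun.add_left blinfun.scaleR_left)
    ultimately show ?thesis by blast
  next
    case False
    then have "a \<in> span F"
      using in_span_if_annihilator_vanishes[OF insert.hyps(1) \<open>subspace Y\<close> separating] by blast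
    then have "blinfun_apply (g - h) a = 0"
      using h(2) linear_eq_0_on_span[OF linear_blinfun_apply, of F "g - h" a]
      by (simp add: blinfun.diff_left)
    then show ?thesis using h by (auto simp: blinfun.diff_left)
  qed
qed

lemma separating_subspace_wstar_dense:
  fixes Y :: "('a::real_normed_vector \<Rightarrow>\<^sub>L real) set"
  assumes "subspace Y"
    and separating: "\<And>x. (\<And>h. h \<in> Y \<Longrightarrow> blinfun_apply h x = 0) \<Longrightarrow> x = 0"
  shows "wstar_topology closure_of Y = UNIV"
proof -
  have "\<exists>h\<in>Y. h \<in> U" if "openin wstar_topology U" "g \<in> U" for g U
  proof -
    obtain V where V: "openin (powertop_real UNIV) V" "U = blinfun_apply -` V"
      using \<open>openin wstar_topology U\<close> unfolding wstar_topology_def openin_pullback_topology by auto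
    then obtain X where X: "blinfun_apply g \<in> Pi\<^sub>E UNIV X"
      "finite {i. X i \<noteq> UNIV}" "Pi\<^sub>E UNIV X \<subseteq> V"
      using product_topology_open_contains_basis[OF V(1)] \<open>g \<in> U\<close> by force
    obtain h where "h \<in> Y" "\<forall>i\<in>{i. X i \<noteq> UNIV}. blinfun_apply h i = blinfun_apply g i"
      using separating_subspace_interpolates[OF X(2) assms] by blast
    moreover from this have "blinfun_apply h \<in> Pi\<^sub>E UNIV X"
      using X(1) by (auto simp: PiE_iff) (metis UNIV_I)
    ultimately show ?thesis using X(3) V(2) by blast
  qed
  then show ?thesis by (fastforce simp: in_closure_of)
qed

lemma wstar_continuous_on_vanishing_on_dense:
  assumes "wstar_continuous_on Z f" "Y \<subseteq> Z" "wstar_topology closure_of Y = UNIV"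
    and "\<And>y. y \<in> Y \<Longrightarrow> f y = 0" "z \<in> Z"
  shows "f z = 0"
proof -
  have "f ` ((subtopology wstar_topology Z) closure_of Y) \<subseteq> euclideanreal closure_of (f ` Y)"
    using assms(1) unfolding wstar_continuous_on_def by (rule continuous_map_image_closure_subset)
  also have "\<dots> \<subseteq> euclideanreal closure_of {0}"
    using assms(4) by (intro closure_of_mono) auto
  also have "\<dots> = {0}" by (simp add: closure_of_eq)
  finally show ?thesis
    using assms(2,3,5) by (auto simp: closure_of_subtopology Int_absorb1)
qed

section \<open>Adjoining a line to a closed subspace\<close>

definition add_line :: "'v::real_vector set \<Rightarrow> 'v \<Rightarrow> 'v set" where
  "add_line Y g = {y + t *\<^sub>R g | y t. y \<in> Y}"

(* Meaningful only on add_line Y g with g \<notin> Y, where the coefficient is unique. *)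
definition line_coeff :: "'v::real_vector set \<Rightarrow> 'v \<Rightarrow> 'v \<Rightarrow> real" where
  "line_coeff Y g z = (SOME t. z - t *\<^sub>R g \<in> Y)"

lemma line_coeff_eq:
  assumes "subspace Y" "g \<notin> Y" "y \<in> Y"
  shows "line_coeff Y g (y + t *\<^sub>R g) = t"
proof -
  have "t' = t" if "y + t *\<^sub>R g - t' *\<^sub>R g \<in> Y" for t'
  proof (rule ccontr)
    assume "t' \<noteq> t"
    have "(y + t *\<^sub>R g - t' *\<^sub>R g) - y \<in> Y"
      by (rule subspace_diff[OF assms(1) that assms(3)])
    then have "(t - t') *\<^sub>R g \<in> Y" by (simp add: algebra_simps)
    then have "(1 / (t - t')) *\<^sub>R (t - t') *\<^sub>R g \<in> Y"
      by (rule subspace_scale[OF assms(1)])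
    then show False using \<open>t' \<noteq> t\<close> assms(2) by simp
  qed
  moreover have "y + t *\<^sub>R g - t *\<^sub>R g \<in> Y" using assms(3) by simp
  ultimately show ?thesis unfolding line_coeff_def by (metis (mono_tags, lifting) someI)
qed

lemma subset_add_line: "Y \<subseteq> add_line Y g"
  unfolding add_line_def by (force intro: exI[of _ 0])

lemma in_add_line: "subspace Y \<Longrightarrow> g \<in> add_line Y g"
  unfolding add_line_def using subspace_0 by (force intro: exI[of _ 1])

lemma add_lineE:
  assumes "v \<in> add_line Y g"
  obtains y t where "v = y + t *\<^sub>R g" "y \<in> Y"
  using assms unfolding add_line_def by blast

lemma subspace_add_line:
  assumes "subspace Y"
  shows "subspace (add_line Y g)"
  unfolding subspace_def
proof (intro conjI ballI allI)
  show "0 \<in> add_line Y g" using assms subspace_0 subset_add_line by blast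
next
  fix v w assume "v \<in> add_line Y g" "w \<in> add_line Y g"
  then obtain y s z t where "v = y + s *\<^sub>R g" "w = z + t *\<^sub>R g" "y \<in> Y" "z \<in> Y"
    by (meson add_lineE)
  then have "v + w = (y + z) + (s + t) *\<^sub>R g" "y + z \<in> Y"
    using assms by (simp_all add: algebra_simps subspace_add)
  then show "v + w \<in> add_line Y g" unfolding add_line_def by blast
next
  fix c :: real and v assume "v \<in> add_line Y g"
  then obtain y s where "v = y + s *\<^sub>R g" "y \<in> Y" by (rule add_lineE)
  then have "c *\<^sub>R v = c *\<^sub>R y + (c * s) *\<^sub>R g" "c *\<^sub>R y \<in> Y"
    using assms by (simp_all add: algebra_simps subspace_scale)
  then show "c *\<^sub>R v \<in> add_line Y g" unfolding add_line_def by blast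
qed

lemma linear_on_subspace_line_coeff:
  fixes Y :: "('a::real_normed_vector \<Rightarrow>\<^sub>L real) set"
  assumes "subspace Y" "g \<notin> Y"
  shows "linear_on_subspace (add_line Y g) (line_coeff Y g)"
  unfolding linear_on_subspace_def
proof (intro ballI allI)
  fix v w a b assume "v \<in> add_line Y g" "w \<in> add_line Y g"
  then obtain y s z t where vw: "v = y + s *\<^sub>R g" "w = z + t *\<^sub>R g" "y \<in> Y" "z \<in> Y"
    by (meson add_lineE)
  then have "a *\<^sub>R v + b *\<^sub>R w = (a *\<^sub>R y + b *\<^sub>R z) + (a * s + b * t) *\<^sub>R g"
      "a *\<^sub>R y + b *\<^sub>R z \<in> Y"
    using assms(1) by (simp_all add: algebra_simps subspace_add subspace_scale)
  then show "line_coeff Y g (a *\<^sub>R v + b *\<^sub>R w) = a * line_coeff Y g v + b * line_coeff Y g w"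
    using vw line_coeff_eq[OF assms] by simp
qed

lemma abs_mult_infdist_le_norm:
  assumes "subspace Y" "y \<in> Y"
  shows "\<bar>t\<bar> * infdist g Y \<le> norm (y + t *\<^sub>R g)"
proof (cases "t = 0")
  case False
  have "- (1 / t) *\<^sub>R y \<in> Y" using assms by (rule subspace_scale)
  then have "infdist g Y \<le> norm (g + (1 / t) *\<^sub>R y)"
    using infdist_le[of "- (1 / t) *\<^sub>R y" Y g] by (simp add: dist_norm)
  then have "\<bar>t\<bar> * infdist g Y \<le> norm (t *\<^sub>R (g + (1 / t) *\<^sub>R y))"
    by (simp add: mult_left_mono)
  also have "t *\<^sub>R (g + (1 / t) *\<^sub>R y) = y + t *\<^sub>R g" using False by (simp add: algebra_simps)
  finally show ?thesis .
qed simp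

lemma closed_add_line:
  fixes Y :: "'v::banach set"
  assumes "subspace Y" "closed Y"
  shows "closed (add_line Y g)"
proof (cases "g \<in> Y")
  case True
  then have "y + t *\<^sub>R g \<in> Y" if "y \<in> Y" for y t
    using assms(1) that by (simp add: subspace_add subspace_scale)
  then have "add_line Y g \<subseteq> Y" unfolding add_line_def by blast
  then have "add_line Y g = Y" using subset_add_line by blast
  then show ?thesis using assms(2) by simp
next
  case False
  have "Y \<noteq> {}" using subspace_0[OF assms(1)] by blast
  then have "infdist g Y \<noteq> 0" using in_closed_iff_infdist_zero[OF assms(2)] False by blast
  then have "infdist g Y > 0" using infdist_nonneg[of g Y] by linarith
  show ?thesis
    unfolding closed_sequential_limits
  proof (intro allI impI, elim conjE)
    fix v l assume "\<forall>n. v n \<in> add_line Y g" and "v \<longlonglongrightarrow> l"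
    then have "\<forall>n. \<exists>y t. v n = y + t *\<^sub>R g \<and> y \<in> Y" by (meson add_lineE)
    then obtain y t where v: "\<And>n. v n = y n + t n *\<^sub>R g" "\<And>n. y n \<in> Y" by metis
    have coeff_lipschitz: "\<bar>t m - t n\<bar> * infdist g Y \<le> norm (v m - v n)" for m n
    proof -
      have "v m - v n = (y m - y n) + (t m - t n) *\<^sub>R g" by (simp add: v algebra_simps)
      then show ?thesis
        using abs_mult_infdist_le_norm[OF assms(1) subspace_diff[OF assms(1) v(2) v(2)]] by simp
    qed
    have "Cauchy t"
    proof (rule CauchyI)
      fix e :: real assume "e > 0"
      then obtain M where M: "\<forall>m\<ge>M. \<forall>n\<ge>M. norm (v m - v n) < e * infdist g Y"
        using LIMSEQ_imp_Cauchy[OF \<open>v \<longlonglongrightarrow> l\<close>] \<open>infdist g Y > 0\<close>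
        unfolding Cauchy_def dist_norm by (meson mult_pos_pos)
      show "\<exists>M. \<forall>m\<ge>M. \<forall>n\<ge>M. norm (t m - t n) < e"
      proof (intro exI allI impI)
        fix m n assume "m \<ge> M" "n \<ge> M"
        then have "\<bar>t m - t n\<bar> * infdist g Y < e * infdist g Y"
          using M coeff_lipschitz[of m n] by fastforce
        then show "norm (t m - t n) < e" using \<open>infdist g Y > 0\<close> by simp
      qed
    qed
    then obtain T where "t \<longlonglongrightarrow> T" using Cauchy_convergent_iff convergent_def by blast
    then have "(\<lambda>n. v n - t n *\<^sub>R g) \<longlonglongrightarrow> l - T *\<^sub>R g"
      using \<open>v \<longlonglongrightarrow> l\<close> by (intro tendsto_intros)
    then have "y \<longlonglongrightarrow> l - T *\<^sub>R g" by (simp add: v)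
    then have "l - T *\<^sub>R g \<in> Y"
      using assms(2) v(2) unfolding closed_sequential_limits by blast
    then show "l \<in> add_line Y g" unfolding add_line_def by (force intro: exI[of _ T])
  qed
qed

section \<open>Fully Mazur spaces: the coefficient of a line\<close>

lemma wstar_conv_subseq:
  assumes "wstar_conv s l" "strict_mono r"
  shows "wstar_conv (s \<circ> r) l"
  unfolding wstar_conv_def
proof
  fix x
  have "((\<lambda>n. blinfun_apply (s n) x) \<circ> r) \<longlonglongrightarrow> blinfun_apply l x"
    using assms unfolding wstar_conv_def by (blast intro: LIMSEQ_subseq_LIMSEQ)
  then show "(\<lambda>n. blinfun_apply ((s \<circ> r) n) x) \<longlonglongrightarrow> blinfun_apply l x"
    by (simp add: o_def)
qed

lemma in_S1_if_coeff_bounded_away: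
  fixes Y :: "('a::real_normed_vector \<Rightarrow>\<^sub>L real) set"
  assumes "subspace Y" "\<And>n. y n \<in> Y" "y0 \<in> Y"
    and conv: "wstar_conv (\<lambda>n. y n + t n *\<^sub>R g) (y0 + t0 *\<^sub>R g)"
    and "e > 0" and away: "\<And>n. e \<le> \<bar>t n - t0\<bar>"
  shows "g \<in> S1 Y"
proof -
  define w where "w n = (1 / (t n - t0)) *\<^sub>R (y0 - y n)" for n
  have "w n \<in> Y" for n
    unfolding w_def using assms(1-3) by (simp add: subspace_diff subspace_scale)
  moreover have "wstar_conv w g"
    unfolding wstar_conv_def
  proof
    fix x
    define d where "d n = blinfun_apply (y n + t n *\<^sub>R g) x - blinfun_apply (y0 + t0 *\<^sub>R g) x" for n
    have "d \<longlonglongrightarrow> 0"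
      using conv unfolding wstar_conv_def d_def by (simp add: LIM_zero)
    have w_eq: "blinfun_apply (w n) x = blinfun_apply g x - d n / (t n - t0)" for n
    proof -
      have "t n - t0 \<noteq> 0" using away[of n] \<open>e > 0\<close> by auto
      have "blinfun_apply (w n) x
          = (1 / (t n - t0)) * (blinfun_apply y0 x - blinfun_apply (y n) x)"
        by (simp add: w_def blinfun.diff_left blinfun.scaleR_left)
      also have "\<dots> = blinfun_apply g x - ((blinfun_apply (y n) x - blinfun_apply y0 x)
          + (t n - t0) * blinfun_apply g x) / (t n - t0)"
        using \<open>t n - t0 \<noteq> 0\<close> by (simp add: divide_simps)
      also have "(blinfun_apply (y n) x - blinfun_apply y0 x) + (t n - t0) * blinfun_apply g x = d n"
        by (simp add: d_def blinfun.add_left blinfun.scaleR_left algebra_simps)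
      finally show ?thesis .
    qed
    have bound: "norm (d n / (t n - t0)) \<le> \<bar>d n\<bar> / e" for n
    proof -
      have "\<bar>d n\<bar> / \<bar>t n - t0\<bar> \<le> \<bar>d n\<bar> / e"
        using away[of n] \<open>e > 0\<close> by (intro divide_left_mono mult_pos_pos) auto
      then show ?thesis by (simp add: abs_divide)
    qed
    then have "\<forall>\<^sub>F n in sequentially. norm (d n / (t n - t0)) \<le> \<bar>d n\<bar> / e"
      by (intro always_eventually allI)
    then have "(\<lambda>n. d n / (t n - t0)) \<longlonglongrightarrow> 0"
      using tendsto_divide_zero[OF tendsto_rabs_zero[OF \<open>d \<longlonglongrightarrow> 0\<close>]]
      by (rule Lim_null_comparison)
    then show "(\<lambda>n. blinfun_apply (w n) x) \<longlonglongrightarrow> blinfun_apply g x"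
      unfolding w_eq using tendsto_diff[OF tendsto_const, of _ 0 sequentially "blinfun_apply g x"]
      by simp
  qed
  ultimately show ?thesis unfolding S1_def by blast
qed

lemma wstar_seq_continuous_on_line_coeff:
  fixes Y :: "('a::real_normed_vector \<Rightarrow>\<^sub>L real) set"
  assumes "subspace Y" "g \<notin> S1 Y"
  shows "wstar_seq_continuous_on (add_line Y g) (line_coeff Y g)"
  unfolding wstar_seq_continuous_on_def
proof (intro allI impI)
  fix s z assume "\<forall>n. s n \<in> add_line Y g" "z \<in> add_line Y g" and conv: "wstar_conv s z"
  then have "\<forall>n. \<exists>y t. s n = y + t *\<^sub>R g \<and> y \<in> Y" by (meson add_lineE)
  then obtain y t where s: "\<And>n. s n = y n + t n *\<^sub>R g" "\<And>n. y n \<in> Y" by metis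
  obtain y0 t0 where z: "z = y0 + t0 *\<^sub>R g" "y0 \<in> Y" using \<open>z \<in> add_line Y g\<close> by (rule add_lineE)
  have "g \<notin> Y" using assms(2) subset_S1 by blast
  have "t \<longlonglongrightarrow> t0"
  proof (rule ccontr)
    assume "\<not> t \<longlonglongrightarrow> t0"
    then obtain e where "e > 0" and not_ev: "\<not> eventually (\<lambda>n. dist (t n) t0 < e) sequentially"
      unfolding tendsto_iff by blast
    obtain r :: "nat \<Rightarrow> nat" where "strict_mono r" "\<forall>n. \<not> dist (t (r n)) t0 < e"
      using not_eventually_sequentiallyD[OF not_ev] by blast
    then have "\<And>n. e \<le> \<bar>t (r n) - t0\<bar>" by (simp add: dist_real_def not_less)
    moreover have "wstar_conv (\<lambda>n. y (r n) + t (r n) *\<^sub>R g) (y0 + t0 *\<^sub>R g)"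
      using wstar_conv_subseq[OF conv \<open>strict_mono r\<close>] by (simp add: o_def s z)
    ultimately have "g \<in> S1 Y"
      using in_S1_if_coeff_bounded_away[where y = "\<lambda>n. y (r n)" and t = "\<lambda>n. t (r n)",
          OF assms(1) s(2) z(2)] \<open>e > 0\<close> by blast
    then show False using assms(2) by blast
  qed
  then show "(\<lambda>n. line_coeff Y g (s n)) \<longlonglongrightarrow> line_coeff Y g z"
    using line_coeff_eq[OF assms(1) \<open>g \<notin> Y\<close>] s z by simp
qed

lemma fully_Mazur_imp_S1_eq_UNIV:
  fixes Y :: "('a::banach \<Rightarrow>\<^sub>L real) set"
  assumes "fully_Mazur TYPE('a)" "norming Y" "closed Y"
  shows "S1 Y = UNIV"
proof (rule ccontr)
  assume "S1 Y \<noteq> UNIV"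
  then obtain g where "g \<notin> S1 Y" by blast
  then have "g \<notin> Y" using subset_S1 by blast
  have Y: "subspace Y" using assms(2) by (rule norming_imp_subspace)
  have "wstar_continuous_on (add_line Y g) (line_coeff Y g)"
    using assms(1) norming_superset[OF assms(2) subset_add_line subspace_add_line[OF Y]]
      closed_add_line[OF Y assms(3)] linear_on_subspace_line_coeff[OF Y \<open>g \<notin> Y\<close>]
      wstar_seq_continuous_on_line_coeff[OF Y \<open>g \<notin> S1 Y\<close>]
    unfolding fully_Mazur_def by blast
  moreover have "wstar_topology closure_of Y = UNIV"
    using separating_subspace_wstar_dense[OF Y] norming_separates[OF assms(2)] by blast
  moreover have "line_coeff Y g y = 0" if "y \<in> Y" for y
    using line_coeff_eq[OF Y \<open>g \<notin> Y\<close> that, of 0] by simp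
  ultimately have "line_coeff Y g g = 0"
    using wstar_continuous_on_vanishing_on_dense[OF _ subset_add_line] in_add_line[OF Y] by blast
  moreover have "line_coeff Y g g = 1"
    using line_coeff_eq[OF Y \<open>g \<notin> Y\<close> subspace_0[OF Y], of 1] by simp
  ultimately show False by simp
qed

section \<open>Weak* sequentially continuous functionals as evaluations\<close>

lemma linear_on_subspace_scale:
  assumes "linear_on_subspace Y f" "y \<in> Y"
  shows "f (a *\<^sub>R y) = a * f y"
  using assms(1)[unfolded linear_on_subspace_def, rule_format, OF assms(2) assms(2), of a 0] by simp

lemma linear_on_subspace_zero:
  "linear_on_subspace Y f \<Longrightarrow> subspace Y \<Longrightarrow> f 0 = 0"
  using linear_on_subspace_scale[of Y f 0 0] subspace_0 by fastforce

lemma linear_on_subspace_diff: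
  assumes "linear_on_subspace Y f" "y \<in> Y" "z \<in> Y"
  shows "f (y - z) = f y - f z"
  using assms(1)[unfolded linear_on_subspace_def, rule_format, OF assms(2,3), of 1 "-1"] by simp

lemma subspace_kernel:
  assumes "subspace Y" "linear_on_subspace Y f"
  shows "subspace {y \<in> Y. f y = 0}"
  unfolding subspace_def
proof (intro conjI ballI allI)
  show "0 \<in> {y \<in> Y. f y = 0}" using assms linear_on_subspace_zero subspace_0 by blast
next
  fix y z assume "y \<in> {y \<in> Y. f y = 0}" "z \<in> {y \<in> Y. f y = 0}"
  then show "y + z \<in> {y \<in> Y. f y = 0}"
    using assms(2)[unfolded linear_on_subspace_def, rule_format, of y z 1 1] assms(1)
    by (simp add: subspace_add)
next
  fix a :: real and y assume "y \<in> {y \<in> Y. f y = 0}"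
  then show "a *\<^sub>R y \<in> {y \<in> Y. f y = 0}"
    using assms(1) linear_on_subspace_scale[OF assms(2)] by (simp add: subspace_scale)
qed

lemma S1_kernel_vanishes:
  assumes "wstar_seq_continuous_on Y f" "u \<in> S1 {y \<in> Y. f y = 0}" "u \<in> Y"
  shows "f u = 0"
proof -
  obtain s where s: "\<forall>n. s n \<in> Y \<and> f (s n) = 0" "wstar_conv s u"
    using assms(2) unfolding S1_def by blast
  then have "(\<lambda>n. f (s n)) \<longlonglongrightarrow> f u"
    using assms(1,3) unfolding wstar_seq_continuous_on_def by blast
  then show ?thesis using s(1) by (simp add: LIMSEQ_const_iff)
qed

lemma closed_kernel:
  assumes "closed Y" "wstar_seq_continuous_on Y f"
  shows "closed {y \<in> Y. f y = 0}"
  unfolding closed_sequential_limits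
proof (intro allI impI, elim conjE)
  fix s l assume "\<forall>n. s n \<in> {y \<in> Y. f y = 0}" "s \<longlonglongrightarrow> l"
  moreover from this have "l \<in> Y"
    using assms(1) closed_sequential_limits by blast
  ultimately show "l \<in> {y \<in> Y. f y = 0}"
    using S1_kernel_vanishes[OF assms(2)] tendsto_imp_wstar_conv unfolding S1_def by blast
qed

lemma wstar_seq_continuous_on_imp_bounded:
  assumes "subspace Y" "linear_on_subspace Y f" "wstar_seq_continuous_on Y f"
  obtains B where "B > 0" "\<And>y. y \<in> Y \<Longrightarrow> \<bar>f y\<bar> \<le> B * norm y"
proof -
  have "continuous_on Y f"
    using assms(3) tendsto_imp_wstar_conv unfolding wstar_seq_continuous_on_def
    by (intro continuous_on_sequentiallyI) blast
  then obtain \<delta> where "\<delta> > 0" and "\<forall>y\<in>Y. dist y 0 < \<delta> \<longrightarrow> dist (f y) (f 0) < 1"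
    using subspace_0[OF assms(1)] unfolding continuous_on_iff by (meson zero_less_one)
  then have \<delta>: "\<And>y. y \<in> Y \<Longrightarrow> norm y < \<delta> \<Longrightarrow> \<bar>f y\<bar> < 1"
    using linear_on_subspace_zero[OF assms(2,1)] by (simp add: dist_norm)
  have "\<bar>f y\<bar> \<le> 2 / \<delta> * norm y" if "y \<in> Y" for y
  proof (cases "y = 0")
    case True
    then show ?thesis using linear_on_subspace_zero[OF assms(2,1)] by simp
  next
    case False
    let ?r = "\<delta> / (2 * norm y)"
    have "norm (?r *\<^sub>R y) < \<delta>" using False \<open>\<delta> > 0\<close> by simp
    then have "?r * \<bar>f y\<bar> < 1"
      using \<delta>[of "?r *\<^sub>R y"] subspace_scale[OF assms(1) that]
        linear_on_subspace_scale[OF assms(2) that] \<open>\<delta> > 0\<close> by (simp add: abs_mult)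
    then show ?thesis using False \<open>\<delta> > 0\<close> by (simp add: field_simps)
  qed
  then show thesis using that[of "2 / \<delta>"] \<open>\<delta> > 0\<close> by simp
qed

lemma evaluation_near_multiple_of_functional:
  assumes "subspace Y" "linear_on_subspace Y f" "\<And>y. y \<in> Y \<Longrightarrow> \<bar>f y\<bar> \<le> B * norm y"
    and "u \<in> Y" "f u = 1" "\<epsilon> \<ge> 0"
    and annihilated: "\<And>k. k \<in> Y \<Longrightarrow> f k = 0 \<Longrightarrow> \<bar>blinfun_apply k x\<bar> \<le> \<epsilon> * norm x * norm k"
    and "y \<in> Y"
  shows "\<bar>blinfun_apply y x - f y * blinfun_apply u x\<bar> \<le> \<epsilon> * (1 + B * norm u) * norm x * norm y"
proof -
  define k where "k = y - f y *\<^sub>R u"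
  have "k \<in> Y" unfolding k_def using assms(1,4,8) by (simp add: subspace_diff subspace_scale)
  moreover have "f k = 0"
    using assms(5) linear_on_subspace_diff[OF assms(2,8) subspace_scale[OF assms(1,4)]]
      linear_on_subspace_scale[OF assms(2,4)] by (simp add: k_def)
  ultimately have "\<bar>blinfun_apply k x\<bar> \<le> \<epsilon> * norm x * norm k" by (rule annihilated)
  moreover have "norm k \<le> (1 + B * norm u) * norm y"
  proof -
    have "norm k \<le> norm y + \<bar>f y\<bar> * norm u"
      unfolding k_def using norm_triangle_ineq4[of y "f y *\<^sub>R u"] by simp
    also have "\<dots> \<le> norm y + B * norm y * norm u" using assms(3)[OF assms(8)] by (simp add: mult_right_mono)
    finally show ?thesis by (simp add: algebra_simps)
  qed
  then have "\<epsilon> * norm x * norm k \<le> \<epsilon> * norm x * ((1 + B * norm u) * norm y)"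
    using \<open>\<epsilon> \<ge> 0\<close> by (simp add: mult_left_mono)
  moreover have "blinfun_apply k x = blinfun_apply y x - f y * blinfun_apply u x"
    by (simp add: k_def blinfun.diff_left blinfun.scaleR_left)
  ultimately show ?thesis by (simp add: mult_ac)
qed

lemma rescaled_evaluation_approximates:
  assumes lower: "\<And>x M. 0 \<le> M \<Longrightarrow> (\<And>y. y \<in> Y \<Longrightarrow> blinfun_apply y x \<le> M * norm y) \<Longrightarrow> c * norm x \<le> M"
    and "c > 0" "B \<ge> 0" and bound: "\<And>y. y \<in> Y \<Longrightarrow> \<bar>f y\<bar> \<le> B * norm y"
    and "x \<noteq> 0" "0 \<le> \<eta>" "\<eta> \<le> c / 2"
    and near: "\<And>y. y \<in> Y \<Longrightarrow> \<bar>blinfun_apply y x - f y * a\<bar> \<le> \<eta> * norm x * norm y"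
    and "y \<in> Y"
  shows "\<bar>blinfun_apply y ((1 / a) *\<^sub>R x) - f y\<bar> \<le> 2 * B * \<eta> / c * norm y"
proof -
  have "c * norm x \<le> \<bar>a\<bar> * B + \<eta> * norm x"
  proof (rule lower)
    show "0 \<le> \<bar>a\<bar> * B + \<eta> * norm x" using assms(3,6) by simp
  next
    fix y assume "y \<in> Y"
    have "f y * a \<le> \<bar>a\<bar> * (B * norm y)"
      using bound[OF \<open>y \<in> Y\<close>] abs_ge_self[of "f y * a"]
      by (metis abs_ge_zero abs_mult mult.commute mult_left_mono order_trans)
    then show "blinfun_apply y x \<le> (\<bar>a\<bar> * B + \<eta> * norm x) * norm y"
      using near[OF \<open>y \<in> Y\<close>] by (simp add: algebra_simps abs_le_iff)
  qed
  \<comment> \<open>As \<open>\<eta> \<le> c/2\<close>, the norming bound forces \<open>c \<parallel>x\<parallel> \<le> 2 B \<bar>a\<bar>\<close>, so \<open>x / a\<close> stays bounded.\<close>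
  then have ax: "c * norm x \<le> 2 * (\<bar>a\<bar> * B)"
    using mult_right_mono[OF assms(7) norm_ge_zero[of x]] by linarith
  moreover have "c * norm x > 0" using assms(2,5) by simp
  ultimately have "a \<noteq> 0" by auto
  have "\<eta> * norm x * norm y * c \<le> \<eta> * norm y * (2 * (\<bar>a\<bar> * B))"
    using mult_left_mono[OF ax, of "\<eta> * norm y"] assms(6) by (simp add: mult_ac)
  then have "\<eta> * norm x * norm y \<le> 2 * B * \<eta> / c * norm y * \<bar>a\<bar>"
    using \<open>c > 0\<close> by (simp add: field_simps)
  then have "\<bar>blinfun_apply y x - f y * a\<bar> \<le> 2 * B * \<eta> / c * norm y * \<bar>a\<bar>"
    using near[OF \<open>y \<in> Y\<close>] by linarith
  moreover have "blinfun_apply y ((1 / a) *\<^sub>R x) - f y = (blinfun_apply y x - f y * a) / a"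
    using \<open>a \<noteq> 0\<close> by (simp add: blinfun.scaleR_right field_simps)
  ultimately show ?thesis using \<open>a \<noteq> 0\<close> by (simp add: abs_divide pos_divide_le_eq)
qed

lemma evaluation_approximates_functional:
  assumes "norming Y" "linear_on_subspace Y f" "\<And>y. y \<in> Y \<Longrightarrow> \<bar>f y\<bar> \<le> B * norm y" "B > 0"
    and "u \<in> Y" "f u = 1" "\<not> norming {y \<in> Y. f y = 0}" "\<delta> > 0"
  obtains z where "\<And>y. y \<in> Y \<Longrightarrow> \<bar>blinfun_apply y z - f y\<bar> \<le> \<delta> * norm y"
proof -
  have Y: "subspace Y" using assms(1) by (rule norming_imp_subspace)
  obtain c where "c > 0"
    and lower: "\<And>x M. M \<ge> 0 \<Longrightarrow> (\<And>y. y \<in> Y \<Longrightarrow> blinfun_apply y x \<le> M * norm y) \<Longrightarrow> c * norm x \<le> M"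
    using norming_imp_lower_bound[OF assms(1)] by blast
  define \<eta> where "\<eta> = min (c / 2) (c * \<delta> / (2 * B))"
  define D where "D = 1 + B * norm u"
  have "\<eta> > 0" "D > 0" unfolding \<eta>_def D_def using \<open>c > 0\<close> assms(4,8) by (simp_all add: add_pos_nonneg)
  obtain x where "x \<noteq> 0"
    and x: "\<And>k. k \<in> {y \<in> Y. f y = 0} \<Longrightarrow> \<bar>blinfun_apply k x\<bar> \<le> \<eta> / D * norm x * norm k"
    using not_norming_imp_almost_annihilated[OF subspace_kernel[OF Y assms(2)] assms(7)
        divide_pos_pos[OF \<open>\<eta> > 0\<close> \<open>D > 0\<close>]] by blast
  have near: "\<bar>blinfun_apply y x - f y * blinfun_apply u x\<bar> \<le> \<eta> * norm x * norm y" if "y \<in> Y" for y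
    using evaluation_near_multiple_of_functional[OF Y assms(2,3,5,6) _ _ that, of "\<eta> / D" x]
      x \<open>\<eta> > 0\<close> \<open>D > 0\<close> by (simp add: D_def)
  have "2 * B * \<eta> / c \<le> \<delta>"
    using \<open>c > 0\<close> assms(4) by (simp add: \<eta>_def field_simps min_def)
  have "\<bar>blinfun_apply y ((1 / blinfun_apply u x) *\<^sub>R x) - f y\<bar> \<le> \<delta> * norm y" if "y \<in> Y" for y
  proof -
    have "\<eta> \<le> c / 2" by (simp add: \<eta>_def)
    then have "\<bar>blinfun_apply y ((1 / blinfun_apply u x) *\<^sub>R x) - f y\<bar> \<le> 2 * B * \<eta> / c * norm y"
      using rescaled_evaluation_approximates[OF lower \<open>c > 0\<close> _ assms(3) \<open>x \<noteq> 0\<close> _ _ near that]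
        \<open>\<eta> > 0\<close> assms(4) by simp
    also have "\<dots> \<le> \<delta> * norm y"
      using \<open>2 * B * \<eta> / c \<le> \<delta>\<close> by (rule mult_right_mono) simp
    finally show ?thesis .
  qed
  then show thesis by (rule that)
qed

lemma functional_eq_evaluation_if_approximable:
  fixes Y :: "('a::banach \<Rightarrow>\<^sub>L real) set"
  assumes "norming Y"
    and approx: "\<And>\<delta>. \<delta> > 0 \<Longrightarrow> \<exists>z. \<forall>y\<in>Y. \<bar>blinfun_apply y z - f y\<bar> \<le> \<delta> * norm y"
  obtains x where "\<And>y. y \<in> Y \<Longrightarrow> f y = blinfun_apply y x"
proof -
  obtain c where "c > 0"
    and lower: "\<And>x M. M \<ge> 0 \<Longrightarrow> (\<And>y. y \<in> Y \<Longrightarrow> blinfun_apply y x \<le> M * norm y) \<Longrightarrow> c * norm x \<le> M"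
    using norming_imp_lower_bound[OF assms(1)] by blast
  have "\<exists>z. \<forall>y\<in>Y. \<bar>blinfun_apply y z - f y\<bar> \<le> 1 / real (Suc n) * norm y" for n
    by (rule approx) simp
  then obtain z where z: "\<And>n y. y \<in> Y \<Longrightarrow> \<bar>blinfun_apply y (z n) - f y\<bar> \<le> 1 / real (Suc n) * norm y"
    by metis
  have dist_z: "c * norm (z m - z n) \<le> 1 / real (Suc m) + 1 / real (Suc n)" for m n
  proof (rule lower)
    fix y assume "y \<in> Y"
    then show "blinfun_apply y (z m - z n) \<le> (1 / real (Suc m) + 1 / real (Suc n)) * norm y"
      using z[of y m] z[of y n] by (simp add: blinfun.diff_right algebra_simps abs_le_iff)
  qed simp
  have "Cauchy z"
  proof (rule CauchyI)
    fix e :: real assume "e > 0"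
    then obtain N where N: "1 / real (Suc N) < c * e / 2"
      using reals_Archimedean[of "c * e / 2"] \<open>c > 0\<close> by (auto simp: inverse_eq_divide)
    have "norm (z m - z n) < e" if "m \<ge> N" "n \<ge> N" for m n
    proof -
      have "1 / real (Suc m) \<le> 1 / real (Suc N)" "1 / real (Suc n) \<le> 1 / real (Suc N)"
        using that by (simp_all add: frac_le)
      then have "c * norm (z m - z n) < c * e" using dist_z[of m n] N by linarith
      then show ?thesis using \<open>c > 0\<close> by simp
    qed
    then show "\<exists>M. \<forall>m\<ge>M. \<forall>n\<ge>M. norm (z m - z n) < e" by blast
  qed
  then obtain x where "z \<longlonglongrightarrow> x" using Cauchy_convergent convergent_def by blast
  have "f y = blinfun_apply y x" if "y \<in> Y" for y
  proof -
    have "(\<lambda>n. \<bar>blinfun_apply y (z n) - f y\<bar>) \<longlonglongrightarrow> \<bar>blinfun_apply y x - f y\<bar>"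
      using \<open>z \<longlonglongrightarrow> x\<close> by (intro tendsto_intros)
    moreover have "(\<lambda>n. 1 / real (Suc n) * norm y) \<longlonglongrightarrow> 0"
      using tendsto_mult_left_zero[OF LIMSEQ_Suc[OF lim_inverse_n']] by (simp add: inverse_eq_divide)
    ultimately have "\<bar>blinfun_apply y x - f y\<bar> \<le> 0"
      using z[OF that] by (intro LIMSEQ_le) auto
    then show ?thesis by simp
  qed
  then show thesis by (rule that)
qed

lemma functional_eq_evaluation_if_S1_UNIV:
  fixes Y :: "('a::banach \<Rightarrow>\<^sub>L real) set"
  assumes "norming Y" "closed Y" "linear_on_subspace Y f" "wstar_seq_continuous_on Y f"
    and S1_UNIV: "\<And>K :: ('a \<Rightarrow>\<^sub>L real) set. norming K \<Longrightarrow> closed K \<Longrightarrow> S1 K = UNIV"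
  obtains x where "\<And>y. y \<in> Y \<Longrightarrow> f y = blinfun_apply y x"
proof (cases "\<forall>y\<in>Y. f y = 0")
  case True
  then show thesis using that[of 0] by simp
next
  case False
  have Y: "subspace Y" using assms(1) by (rule norming_imp_subspace)
  obtain v where "v \<in> Y" "f v \<noteq> 0" using False by blast
  define u where "u = (1 / f v) *\<^sub>R v"
  have "u \<in> Y" "f u = 1"
    using \<open>v \<in> Y\<close> \<open>f v \<noteq> 0\<close> linear_on_subspace_scale[OF assms(3)] by (simp_all add: u_def subspace_scale[OF Y])
  have "\<not> norming {y \<in> Y. f y = 0}"
  proof
    assume "norming {y \<in> Y. f y = 0}"
    then have "u \<in> S1 {y \<in> Y. f y = 0}"
      using S1_UNIV closed_kernel[OF assms(2,4)] by blast
    then show False using S1_kernel_vanishes[OF assms(4)] \<open>u \<in> Y\<close> \<open>f u = 1\<close> by fastforce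
  qed
  moreover obtain B where "B > 0" "\<And>y. y \<in> Y \<Longrightarrow> \<bar>f y\<bar> \<le> B * norm y"
    using wstar_seq_continuous_on_imp_bounded[OF Y assms(3,4)] by blast
  ultimately have "\<exists>z. \<forall>y\<in>Y. \<bar>blinfun_apply y z - f y\<bar> \<le> \<delta> * norm y" if "\<delta> > 0" for \<delta>
    using evaluation_approximates_functional[OF assms(1,3) _ _ \<open>u \<in> Y\<close> \<open>f u = 1\<close> _ that]
    by metis
  then show thesis using functional_eq_evaluation_if_approximable[OF assms(1)] that by blast
qed

theorem theorem3p3:
  "fully_Mazur TYPE('a::banach) \<longleftrightarrow>
     (\<forall>Y :: ('a \<Rightarrow>\<^sub>L real) set. norming Y \<and> closed Y \<longrightarrow> S1 Y = UNIV)"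
proof
  assume "fully_Mazur TYPE('a)"
  then show "\<forall>Y :: ('a \<Rightarrow>\<^sub>L real) set. norming Y \<and> closed Y \<longrightarrow> S1 Y = UNIV"
    using fully_Mazur_imp_S1_eq_UNIV by blast
next
  assume S1_UNIV: "\<forall>Y :: ('a \<Rightarrow>\<^sub>L real) set. norming Y \<and> closed Y \<longrightarrow> S1 Y = UNIV"
  show "fully_Mazur TYPE('a)"
    unfolding fully_Mazur_def
  proof (intro allI impI, elim conjE)
    fix Y :: "('a \<Rightarrow>\<^sub>L real) set" and f
    assume "norming Y" "closed Y" "linear_on_subspace Y f" "wstar_seq_continuous_on Y f"
    then obtain x where "\<And>y. y \<in> Y \<Longrightarrow> f y = blinfun_apply y x"
      using functional_eq_evaluation_if_S1_UNIV S1_UNIV by metis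
    then show "wstar_continuous_on Y f" by (rule wstar_continuous_on_evaluation)
  qed
qed

end
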